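(* For any constellation, bit mapping and coding, the bit error rate of a decoder with center-convex decision regions operating in the channel $\mathbf r=\mathbf s+\boldsymbol\xi$, $\boldsymbol\xi\sim\mathcal N(\mathbf 0,\sigma_0^2\mathbf I)$ in $\mathbb R^n$ (fixed signal), is a convex function of the noise power $\sigma_0^2$ in the low-noise (high-SNR) regime $b_n\sigma_0^2\le d_{\min}^2$, where $b_n=n+2+\sqrt{2(n+2)}$.
   Context: Setting: $\mathbf s\in\{\mathbf s_1,\dots,\mathbf s_M\}$ with priors $\pi_k$; the decoder has pairwise disjoint decision regions $\Omega_k$ independent of $\sigma_0$ (output $\mathbf s_k$ if $\mathbf r\in\Omega_k$); $\Omega_k$ is center-convex if for every $\mathbf x\in\Omega_k$ the segment from $\mathbf s_k$ to $\mathbf x$ lies in $\Omega_k$. BER $=\sum_i\sum_{j\ne i}\frac{h_{ij}}{\log_2M}\pi_i\Pr[\mathbf r\in\Omega_j\mid\mathbf s=\mathbf s_i]$, where $h_{ij}$ is the Hamming distance between the bit labels of $\mathbf s_i$ and $\mathbf s_j$. $d_{\min}=\min_kd_{\min,k}$, with $d_{\min,k}$ the minimum distance from $\mathbf s_k$ to the boundary of $\Omega_k$. *)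

theory Defs
  imports "HOL-Analysis.Analysis"
begin

definition hamming :: "bool list \<Rightarrow> bool list \<Rightarrow> nat" where
  "hamming xs ys = card {i. i < length xs \<and> xs ! i \<noteq> ys ! i}"

text \<open>Density of r = s + xi, xi ~ N(0, v I) on the n-dimensional Euclidean space, v = sigma_0^2.\<close>
definition gauss_density :: "real \<Rightarrow> 'a::euclidean_space \<Rightarrow> 'a \<Rightarrow> real" where
  "gauss_density v s x =
     (2 * pi * v) powr (- real DIM('a) / 2) * exp (- (norm (x - s))\<^sup>2 / (2 * v))"

definition prob_in :: "real \<Rightarrow> 'a::euclidean_space \<Rightarrow> 'a set \<Rightarrow> real" where
  "prob_in v s \<Omega> = (LINT x:\<Omega>|lebesgue. gauss_density v s x)"

definition ber :: "nat \<Rightarrow> (nat \<Rightarrow> 'a::euclidean_space) \<Rightarrow> (nat \<Rightarrow> real) \<Rightarrow> (nat \<Rightarrow> bool list)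
                  \<Rightarrow> (nat \<Rightarrow> 'a set) \<Rightarrow> real \<Rightarrow> real" where
  "ber M s \<pi> lab \<Omega> v =
     (\<Sum>i<M. \<Sum>j\<in>{..<M} - {i}.
        real (hamming (lab i) (lab j)) / log 2 (real M) * \<pi> i * prob_in v (s i) (\<Omega> j))"

definition center_convex :: "'a::real_vector \<Rightarrow> 'a set \<Rightarrow> bool" where
  "center_convex c \<Omega> \<longleftrightarrow> (\<forall>x\<in>\<Omega>. closed_segment c x \<subseteq> \<Omega>)"

definition dmin_k :: "'a::euclidean_space \<Rightarrow> 'a set \<Rightarrow> real" where
  "dmin_k c \<Omega> = infdist c (frontier \<Omega>)"

definition dmin :: "nat \<Rightarrow> (nat \<Rightarrow> 'a::euclidean_space) \<Rightarrow> (nat \<Rightarrow> 'a set) \<Rightarrow> real" where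
  "dmin M s \<Omega> = Min ((\<lambda>k. dmin_k (s k) (\<Omega> k)) ` {..<M})"

definition b_const :: "nat \<Rightarrow> real" where
  "b_const n = real n + 2 + sqrt (2 * (real n + 2))"

end

theory Submission
  imports Defs "HOL-Probability.Probability"
begin

text \<open>
  For a fixed received point x the Gaussian density at x is, as a function of the noise power v,
  the kernel (2 pi v)^(-n/2) exp(-a/(2v)) with a = |x - s|^2, which is convex as long as
  b_n v \<le> a. An error r \<in> \<Omega>_j for transmitted s_i (j \<noteq> i) needs x outside \<Omega>_i; since s_i lies
  in \<Omega>_i by center-convexity, the segment from s_i to x crosses the boundary of \<Omega>_i, so
  |x - s_i| \<ge> d_min. Hence for b_n v \<le> d_min^2 every error probability is the integral of
  functions convex in v, and the BER is a nonnegative combination of these.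
\<close>

lemma convex_pos_mult_le: "convex {v::real. 0 < v \<and> b * v \<le> a}"
  unfolding Collect_conj_eq
  using convex_halfspace_gt[of 0 "1::real"] convex_halfspace_le[of b a] by (simp add: convex_Int)

lemma convex_on_finite_sum:
  assumes "finite I" "convex S" "\<And>i. i \<in> I \<Longrightarrow> convex_on S (f i)"
  shows "convex_on S (\<lambda>x. \<Sum>i\<in>I. f i x)"
  using assms by (induction I rule: finite_induct) (auto simp: convex_on_const)

lemma b_const_quadratic_bound:
  assumes "0 \<le> v" "b_const n * v \<le> a"
  shows "2 * (real n + 2) * v\<^sup>2 \<le> (a - (real n + 2) * v)\<^sup>2"
proof -
  define q where "q = sqrt (2 * (real n + 2))"
  have "q * v \<le> a - (real n + 2) * v"
    using assms(2) by (simp add: b_const_def q_def algebra_simps)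
  moreover have "0 \<le> q * v" using assms(1) by (simp add: q_def)
  ultimately have "(q * v)\<^sup>2 \<le> (a - (real n + 2) * v)\<^sup>2" by (rule power_mono)
  moreover have "(q * v)\<^sup>2 = 2 * (real n + 2) * v\<^sup>2" by (simp add: q_def power_mult_distrib)
  ultimately show ?thesis by simp
qed

text \<open>
  With h' = h g one gets h'' = h (g^2 + g'), and 4 v^4 (g^2 + g') = (a - (n+2) v)^2 - 2 (n+2) v^2;
  for a \<ge> (n+2) v this is nonnegative exactly when b_n v \<le> a, which is where b_n comes from.
\<close>
lemma convex_on_gaussian_kernel:
  fixes a :: real and n :: nat
  shows "convex_on {v. 0 < v \<and> b_const n * v \<le> a}
           (\<lambda>v. (2 * pi * v) powr (- real n / 2) * exp (- a / (2 * v)))"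
proof -
  define e where "e = - real n / 2"
  define h where "h = (\<lambda>v::real. (2 * pi * v) powr e * exp (- a / (2 * v)))"
  define g where "g = (\<lambda>v::real. a / (2 * v\<^sup>2) + e / v)"
  define g' where "g' = (\<lambda>v::real. - a / v ^ 3 - e / v\<^sup>2)"
  have dh: "DERIV h v :> h v * g v" if "0 < v" for v
  proof -
    have "DERIV h v :> e * (2 * pi * v) powr (e - 1) * (2 * pi) * exp (- a / (2 * v))
                       + (2 * pi * v) powr e * (exp (- a / (2 * v)) * (a / (2 * v\<^sup>2)))"
      unfolding h_def using that
      by (auto intro!: derivative_eq_intros simp: power2_eq_square field_simps)
    also have "e * (2 * pi * v) powr (e - 1) * (2 * pi) = (2 * pi * v) powr e * (e / v)"
      using that by (simp add: powr_diff field_simps)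
    finally show ?thesis by (simp add: h_def g_def algebra_simps)
  qed
  have dg: "DERIV g v :> g' v" if "0 < v" for v
    unfolding g_def g'_def using that
    by (auto intro!: derivative_eq_intros simp: power2_eq_square power3_eq_cube field_simps)
  show ?thesis
    unfolding e_def[symmetric] h_def[symmetric]
  proof (rule f''_ge0_imp_convex[OF convex_pos_mult_le])
    fix v assume "v \<in> {v. 0 < v \<and> b_const n * v \<le> a}"
    then have v: "0 < v" and bv: "b_const n * v \<le> a" by auto
    show "DERIV h v :> h v * g v" using dh[OF v] .
    show "DERIV (\<lambda>v. h v * g v) v :> h v * (g v * g v + g' v)"
      using dh[OF v] dg[OF v] by (auto intro!: derivative_eq_intros simp: algebra_simps)
    have "g v * g v + g' v = ((a - (real n + 2) * v)\<^sup>2 - 2 * (real n + 2) * v\<^sup>2) / (4 * v ^ 4)"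
      using v by (simp add: g_def g'_def e_def eval_nat_numeral field_simps)
    also have "\<dots> \<ge> 0" using b_const_quadratic_bound[OF less_imp_le[OF v] bv] by simp
    finally show "0 \<le> h v * (g v * g v + g' v)" by (simp add: h_def)
  qed
qed

lemma convex_on_gauss_density:
  fixes s x :: "'a::euclidean_space"
  shows "convex_on {v. 0 < v \<and> b_const DIM('a) * v \<le> (norm (x - s))\<^sup>2} (\<lambda>v. gauss_density v s x)"
  unfolding gauss_density_def using convex_on_gaussian_kernel by simp

lemma inverse_sqrt_power_eq_powr:
  assumes "0 < y"
  shows "(1 / sqrt y) ^ n = y powr (- real n / 2)"
proof -
  have "1 / sqrt y = y powr (- 1 / 2)"
    using assms by (simp add: powr_half_sqrt[symmetric] powr_minus_divide)
  then have "(1 / sqrt y) ^ n = (y powr (- 1 / 2)) powr real n"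
    using assms by (simp add: powr_realpow)
  also have "\<dots> = y powr (- real n / 2)" by (simp add: powr_powr)
  finally show ?thesis .
qed

lemma gauss_density_eq_prod_normal_density:
  fixes s x :: "'a::euclidean_space"
  assumes "0 < v"
  shows "gauss_density v s x = (\<Prod>b\<in>Basis. normal_density (s \<bullet> b) (sqrt v) (x \<bullet> b))"
proof -
  have "(\<Prod>b\<in>Basis. normal_density (s \<bullet> b) (sqrt v) (x \<bullet> b))
       = (\<Prod>b\<in>Basis. 1 / sqrt (2 * pi * v) * exp (- (x \<bullet> b - s \<bullet> b)\<^sup>2 / (2 * v)))"
    using assms unfolding normal_density_def real_sqrt_pow2[OF less_imp_le[OF assms]] by simp
  also have "\<dots> = (1 / sqrt (2 * pi * v)) ^ DIM('a) * exp (\<Sum>b\<in>Basis. - (x \<bullet> b - s \<bullet> b)\<^sup>2 / (2 * v))"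
    by (simp only: prod.distrib prod_constant exp_sum[OF finite_Basis])
  also have "(\<Sum>b\<in>Basis. - (x \<bullet> b - s \<bullet> b)\<^sup>2 / (2 * v)) = - (norm (x - s))\<^sup>2 / (2 * v)"
  proof -
    have "(norm (x - s))\<^sup>2 = (\<Sum>b\<in>Basis. ((x - s) \<bullet> b) * ((x - s) \<bullet> b))"
      by (simp add: power2_norm_eq_inner euclidean_inner[of "x - s" "x - s"])
    then show ?thesis
      by (simp add: sum_divide_distrib[symmetric] sum_negf inner_diff_left power2_eq_square)
  qed
  also have "(1 / sqrt (2 * pi * v)) ^ DIM('a) = (2 * pi * v) powr (- real DIM('a) / 2)"
    by (rule inverse_sqrt_power_eq_powr) (use assms in simp)
  finally show ?thesis by (simp add: gauss_density_def)
qed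

lemma integrable_gauss_density:
  fixes s :: "'a::euclidean_space"
  assumes v: "0 < v"
  shows "integrable lborel (gauss_density v s)"
proof (rule integrableI_nonneg)
  have eq: "gauss_density v s = (\<lambda>x. \<Prod>b\<in>Basis. normal_density (s \<bullet> b) (sqrt v) (x \<bullet> b))"
    using gauss_density_eq_prod_normal_density[OF v] by auto
  show "gauss_density v s \<in> borel_measurable lborel" unfolding eq by measurable
  show "AE x in lborel. 0 \<le> gauss_density v s x" unfolding eq by (simp add: prod_nonneg)
  have normal: "(\<integral>\<^sup>+x. ennreal (normal_density (s \<bullet> b) (sqrt v) x) \<partial>lborel) = 1" for b
    using nn_integral_eq_integral[OF integrable_normal_density[of "sqrt v" "s \<bullet> b"]]
      integral_normal_density[of "sqrt v" "s \<bullet> b"] v by simp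
  have "(\<integral>\<^sup>+x. ennreal (gauss_density v s x) \<partial>lborel)
     = (\<integral>\<^sup>+x. (\<Prod>b\<in>Basis. ennreal (normal_density (s \<bullet> b) (sqrt v) (x \<bullet> b))) \<partial>lborel)"
    unfolding eq by (simp add: prod_ennreal)
  also have "\<dots> = (\<Prod>b\<in>Basis. (\<integral>\<^sup>+x. ennreal (normal_density (s \<bullet> b) (sqrt v) x) \<partial>lborel))"
    by (rule nn_integral_lborel_prod) auto
  also have "\<dots> = 1" by (simp add: normal)
  finally show "(\<integral>\<^sup>+x. ennreal (gauss_density v s x) \<partial>lborel) < \<infinity>" by simp
qed

lemma set_integrable_gauss_density:
  fixes s :: "'a::euclidean_space"
  assumes "0 < v" "\<Omega> \<in> sets lebesgue"
  shows "set_integrable lebesgue \<Omega> (gauss_density v s)"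
proof -
  have "integrable lborel (gauss_density v s)" by (rule integrable_gauss_density[OF assms(1)])
  then have "integrable lebesgue (gauss_density v s)" by (simp add: integrable_completion)
  then show ?thesis unfolding set_integrable_def by (rule integrable_mult_indicator[OF assms(2)])
qed

lemma convex_on_set_integral:
  fixes f :: "real \<Rightarrow> 'a \<Rightarrow> real"
  assumes "convex S"
    and int: "\<And>v. v \<in> S \<Longrightarrow> set_integrable M A (f v)"
    and cvx: "\<And>x. x \<in> A \<Longrightarrow> convex_on S (\<lambda>v. f v x)"
  shows "convex_on S (\<lambda>v. LINT x:A|M. f v x)"
proof (rule convex_onI[OF _ assms(1)])
  fix t u w :: real assume t: "0 < t" "t < 1" and uw: "u \<in> S" "w \<in> S"
  define z where "z = (1 - t) *\<^sub>R u + t *\<^sub>R w"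
  have "z \<in> S" unfolding z_def using convexD[OF assms(1) uw, of "1 - t" t] t by simp
  have iu: "set_integrable M A (\<lambda>x. (1 - t) * f u x)" using int[OF uw(1)] by auto
  have iw: "set_integrable M A (\<lambda>x. t * f w x)" using int[OF uw(2)] by auto
  have "(LINT x:A|M. f z x) \<le> (LINT x:A|M. (1 - t) * f u x + t * f w x)"
  proof (rule set_integral_mono[OF int[OF \<open>z \<in> S\<close>] set_integral_add(1)[OF iu iw]])
    show "f z x \<le> (1 - t) * f u x + t * f w x" if "x \<in> A" for x
      using convex_onD[OF cvx[OF that], of t u w] t uw by (simp add: z_def)
  qed
  also have "\<dots> = (1 - t) * (LINT x:A|M. f u x) + t * (LINT x:A|M. f w x)"
    by (simp add: set_integral_add(2)[OF iu iw])
  finally show "(LINT x:A|M. f ((1 - t) *\<^sub>R u + t *\<^sub>R w) x)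
      \<le> (1 - t) * (LINT x:A|M. f u x) + t * (LINT x:A|M. f w x)"
    by (simp add: z_def)
qed

lemma convex_on_prob_in:
  fixes s :: "'a::euclidean_space"
  assumes "\<Omega> \<in> sets lebesgue" "convex S" and pos: "\<And>v. v \<in> S \<Longrightarrow> 0 < v"
    and far: "\<And>x v. x \<in> \<Omega> \<Longrightarrow> v \<in> S \<Longrightarrow> b_const DIM('a) * v \<le> (norm (x - s))\<^sup>2"
  shows "convex_on S (\<lambda>v. prob_in v s \<Omega>)"
  unfolding prob_in_def
proof (rule convex_on_set_integral[OF assms(2)])
  show "set_integrable lebesgue \<Omega> (gauss_density v s)" if "v \<in> S" for v
    using set_integrable_gauss_density[OF pos[OF that] assms(1)] .
  show "convex_on S (\<lambda>v. gauss_density v s x)" if "x \<in> \<Omega>" for x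
    by (rule convex_on_subset[OF convex_on_gauss_density _ assms(2)])
      (use pos far[OF that] in auto)
qed

lemma center_mem_if_dmin_k_pos:
  assumes "0 < dmin_k c \<Omega>" "center_convex c \<Omega>"
  shows "c \<in> \<Omega>"
proof -
  have "\<Omega> \<noteq> {}" using assms(1) by (auto simp: dmin_k_def infdist_def)
  then show ?thesis using assms(2) by (auto simp: center_convex_def)
qed

lemma dmin_k_le_dist_outside:
  assumes "c \<in> \<Omega>" "x \<notin> \<Omega>"
  shows "dmin_k c \<Omega> \<le> dist c x"
proof -
  have "closed_segment c x \<inter> frontier \<Omega> \<noteq> {}"
    by (rule connected_Int_frontier) (use assms in auto)
  then obtain p where p: "p \<in> closed_segment c x" "p \<in> frontier \<Omega>" by auto
  have "dmin_k c \<Omega> \<le> dist c p" unfolding dmin_k_def by (rule infdist_le[OF p(2)])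
  also have "\<dots> \<le> dist c x" using dist_in_closed_segment[OF p(1)] by (simp add: dist_commute)
  finally show ?thesis .
qed

lemma dmin_le_dmin_k: "k < M \<Longrightarrow> dmin M s \<Omega> \<le> dmin_k (s k) (\<Omega> k)"
  unfolding dmin_def by (auto intro: Min_le)

lemma dmin_nonneg: "0 < M \<Longrightarrow> 0 \<le> dmin M s \<Omega>"
  unfolding dmin_def by (subst Min_ge_iff) (auto simp: dmin_k_def infdist_nonneg)

lemma dmin_le_dist_other_region:
  assumes "0 < dmin M s \<Omega>"
    and disj: "\<And>i j. i < M \<Longrightarrow> j < M \<Longrightarrow> i \<noteq> j \<Longrightarrow> \<Omega> i \<inter> \<Omega> j = {}"
    and cc: "\<And>k. k < M \<Longrightarrow> center_convex (s k) (\<Omega> k)"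
    and ij: "i < M" "j < M" "i \<noteq> j" and x: "x \<in> \<Omega> j"
  shows "dmin M s \<Omega> \<le> dist (s i) x"
proof -
  have "dmin M s \<Omega> \<le> dmin_k (s i) (\<Omega> i)" using dmin_le_dmin_k[OF ij(1)] .
  moreover have "s i \<in> \<Omega> i"
    using center_mem_if_dmin_k_pos[OF _ cc[OF ij(1)]] assms(1) calculation by simp
  moreover have "x \<notin> \<Omega> i" using disj[OF ij] x by auto
  ultimately show ?thesis using dmin_k_le_dist_outside by fastforce
qed

lemma low_noise_le_norm_sq_other_region:
  fixes s :: "nat \<Rightarrow> 'a::euclidean_space"
  assumes "0 < M" "0 < v" "b_const DIM('a) * v \<le> (dmin M s \<Omega>)\<^sup>2"
    and disj: "\<And>i j. i < M \<Longrightarrow> j < M \<Longrightarrow> i \<noteq> j \<Longrightarrow> \<Omega> i \<inter> \<Omega> j = {}"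
    and cc: "\<And>k. k < M \<Longrightarrow> center_convex (s k) (\<Omega> k)"
    and ij: "i < M" "j < M" "i \<noteq> j" and x: "x \<in> \<Omega> j"
  shows "b_const DIM('a) * v \<le> (norm (x - s i))\<^sup>2"
proof -
  have "0 < b_const DIM('a) * v" using assms(2) by (simp add: b_const_def add_pos_nonneg)
  with assms(3) have "dmin M s \<Omega> \<noteq> 0" by auto
  with dmin_nonneg[OF assms(1), of s \<Omega>] have pos: "0 < dmin M s \<Omega>" by simp
  with dmin_le_dist_other_region[of M s \<Omega>, OF _ disj cc ij x] have "dmin M s \<Omega> \<le> norm (x - s i)"
    by (simp add: dist_norm norm_minus_commute)
  with pos have "(dmin M s \<Omega>)\<^sup>2 \<le> (norm (x - s i))\<^sup>2" by (simp add: power_mono)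
  with assms(3) show ?thesis by simp
qed

theorem corollary5p2:
  fixes M :: nat and s :: "nat \<Rightarrow> 'a::euclidean_space" and \<pi> :: "nat \<Rightarrow> real"
    and lab :: "nat \<Rightarrow> bool list" and \<Omega> :: "nat \<Rightarrow> 'a set"
  assumes M2: "M \<ge> 2"
    and prior_nonneg: "\<And>k. k < M \<Longrightarrow> \<pi> k \<ge> 0"
    and prior_sum: "(\<Sum>k<M. \<pi> k) = 1"
    and lab_len: "\<And>i j. i < M \<Longrightarrow> j < M \<Longrightarrow> length (lab i) = length (lab j)"
    and meas: "\<And>k. k < M \<Longrightarrow> \<Omega> k \<in> sets lebesgue"
    and disj: "\<And>i j. i < M \<Longrightarrow> j < M \<Longrightarrow> i \<noteq> j \<Longrightarrow> \<Omega> i \<inter> \<Omega> j = {}"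
    and cc: "\<And>k. k < M \<Longrightarrow> center_convex (s k) (\<Omega> k)"
  shows "convex_on {v. 0 < v \<and> b_const DIM('a) * v \<le> (dmin M s \<Omega>)\<^sup>2} (ber M s \<pi> lab \<Omega>)"
proof -
  let ?S = "{v. 0 < v \<and> b_const DIM('a) * v \<le> (dmin M s \<Omega>)\<^sup>2}"
  have far: "b_const DIM('a) * v \<le> (norm (x - s i))\<^sup>2"
    if "v \<in> ?S" "i < M" "j < M" "i \<noteq> j" "x \<in> \<Omega> j" for v i j x
    using low_noise_le_norm_sq_other_region[of M v s \<Omega>, OF _ _ _ disj cc] M2 that by simp
  have "convex_on ?S (\<lambda>v. real (hamming (lab i) (lab j)) / log 2 (real M) * \<pi> i * prob_in v (s i) (\<Omega> j))"
    if "i < M" "j < M" "i \<noteq> j" for i j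
  proof (rule convex_on_cmul)
    show "0 \<le> real (hamming (lab i) (lab j)) / log 2 (real M) * \<pi> i"
      using M2 prior_nonneg[OF that(1)] by simp
    show "convex_on ?S (\<lambda>v. prob_in v (s i) (\<Omega> j))"
      by (rule convex_on_prob_in[OF meas[OF that(2)] convex_pos_mult_le])
        (use far that in auto)
  qed
  then show ?thesis
    unfolding ber_def by (intro convex_on_finite_sum convex_pos_mult_le) auto
qed

end
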